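(* Let $\mathbb A=(A_n)_{n\in\mathbb N}$ be a sequence of invertible linear operators on $\mathbb R^d$ and $\mathcal S=\{\|\cdot\|_n;\ n\in\mathbb N\}$ a sequence of norms on $\mathbb R^d$ such that there exist $K,a>0$ with $\|\mathcal A(m,n)x\|_m\le K(m/n)^a\|x\|_n$ and $\|\mathcal A(n,m)x\|_n\le K(m/n)^a\|x\|_m$ for all $m\ge n$ and $x$. Let $\mathbb B=(B_n)_{n\in\mathbb Z^+}$ with $B_n=\mathcal A(2^{n+1},2^n)$ and $\tilde{\mathcal S}=\{\|\cdot\|_{2^n};\ n\in\mathbb Z^+\}$. Then for every $\tau\in\mathbb R$, $$\tau\in\Sigma_{PD,\mathbb A,\mathcal S}\iff 2^\tau\in\Sigma_{ED,\mathbb B,\tilde{\mathcal S}}.$$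
   Context: $\mathbb N=\{1,2,\dots\}$, $\mathbb Z^+=\{0,1,\dots\}$. For invertible $(C_n)$, $\mathcal C(m,n)=C_{m-1}\cdots C_n$ ($m>n$), $\mathrm{Id}$ ($m=n$), $C_m^{-1}\cdots C_{n-1}^{-1}$ ($m<n$). Strong polynomial dichotomy of $(C_n)_{n\in\mathbb N}$ w.r.t. $\{\|\cdot\|_n\}$: there exist $K>0$, $a\ge\lambda>0$, projections $P_n$ with $C_nP_n=P_{n+1}C_n$ and, for $m\ge n$, $x$, $Q_m=\mathrm{Id}-P_m$: $\|\mathcal C(m,n)P_nx\|_m\le K(m/n)^{-\lambda}\|x\|_n$, $\|\mathcal C(n,m)Q_mx\|_n\le K(m/n)^{-\lambda}\|x\|_m$, $\|\mathcal C(m,n)x\|_m\le K(m/n)^a\|x\|_n$, $\|\mathcal C(n,m)x\|_n\le K(m/n)^a\|x\|_m$. Strong exponential dichotomy of $(C_n)_{n\in\mathbb Z^+}$ w.r.t. $\{|\cdot|_n\}$: same with $(m/n)^{-\lambda}$ replaced by $e^{-\lambda(m-n)}$ and $(m/n)^a$ by $e^{a(m-n)}$. $\Sigma_{PD,\mathbb A,\mathcal S}$: set of $\tau\in\mathbb R$ such that $(((n+1)/n)^{-\tau}A_n)_{n\in\mathbb N}$ does not admit a strong polynomial dichotomy w.r.t. $\mathcal S$. $\Sigma_{ED,\mathbb B,\tilde{\mathcal S}}$: set of $\tau>0$ such that $(\tau^{-1}B_n)_{n\in\mathbb Z^+}$ does not admit a strong exponential dichotomy w.r.t. $\tilde{\mathcal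 S}$. *)

theory Defs
  imports "HOL-Analysis.Analysis"
begin

definition is_norm :: "('a::real_vector \<Rightarrow> real) \<Rightarrow> bool" where
  "is_norm N \<longleftrightarrow> (\<forall>x. 0 \<le> N x) \<and> (\<forall>x. N x = 0 \<longleftrightarrow> x = 0)
     \<and> (\<forall>x y. N (x + y) \<le> N x + N y) \<and> (\<forall>c x. N (c *\<^sub>R x) = \<bar>c\<bar> * N x)"

fun fwd :: "(nat \<Rightarrow> 'a \<Rightarrow> 'a) \<Rightarrow> nat \<Rightarrow> nat \<Rightarrow> 'a \<Rightarrow> 'a" where
  "fwd C n 0 = id"
| "fwd C n (Suc k) = C (n + k) \<circ> fwd C n k"

definition cocycle :: "(nat \<Rightarrow> 'a \<Rightarrow> 'a) \<Rightarrow> nat \<Rightarrow> nat \<Rightarrow> 'a \<Rightarrow> 'a" where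
  "cocycle C m n = (if n \<le> m then fwd C n (m - n) else inv (fwd C m (n - m)))"

definition strong_poly_dich ::
  "(nat \<Rightarrow> 'a::real_vector \<Rightarrow> 'a) \<Rightarrow> (nat \<Rightarrow> 'a \<Rightarrow> real) \<Rightarrow> bool" where
  "strong_poly_dich C N \<longleftrightarrow>
    (\<exists>K a lam P. K > 0 \<and> a \<ge> lam \<and> lam > 0 \<and>
      (\<forall>n\<ge>1. linear (P n) \<and> P n \<circ> P n = P n \<and> C n \<circ> P n = P (n + 1) \<circ> C n) \<and>
      (\<forall>m n x. 1 \<le> n \<and> n \<le> m \<longrightarrow>
         N m (cocycle C m n (P n x)) \<le> K * (real m / real n) powr (- lam) * N n x \<and>
         N n (cocycle C n m (x - P m x)) \<le> K * (real m / real n) powr (- lam) * N m x \<and>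
         N m (cocycle C m n x) \<le> K * (real m / real n) powr a * N n x \<and>
         N n (cocycle C n m x) \<le> K * (real m / real n) powr a * N m x))"

definition strong_exp_dich ::
  "(nat \<Rightarrow> 'a::real_vector \<Rightarrow> 'a) \<Rightarrow> (nat \<Rightarrow> 'a \<Rightarrow> real) \<Rightarrow> bool" where
  "strong_exp_dich C N \<longleftrightarrow>
    (\<exists>K a lam P. K > 0 \<and> a \<ge> lam \<and> lam > 0 \<and>
      (\<forall>n. linear (P n) \<and> P n \<circ> P n = P n \<and> C n \<circ> P n = P (n + 1) \<circ> C n) \<and>
      (\<forall>m n x. n \<le> m \<longrightarrow>
         N m (cocycle C m n (P n x)) \<le> K * exp (- lam * (real m - real n)) * N n x \<and>
         N n (cocycle C n m (x - P m x)) \<le> K * exp (- lam * (real m - real n)) * N m x \<and>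
         N m (cocycle C m n x) \<le> K * exp (a * (real m - real n)) * N n x \<and>
         N n (cocycle C n m x) \<le> K * exp (a * (real m - real n)) * N m x))"

definition Sigma_PD :: "(nat \<Rightarrow> 'a::real_vector \<Rightarrow> 'a) \<Rightarrow> (nat \<Rightarrow> 'a \<Rightarrow> real) \<Rightarrow> real set" where
  "Sigma_PD A N = {\<tau>. \<not> strong_poly_dich
      (\<lambda>n x. ((real n + 1) / real n) powr (- \<tau>) *\<^sub>R A n x) N}"

definition Sigma_ED :: "(nat \<Rightarrow> 'a::real_vector \<Rightarrow> 'a) \<Rightarrow> (nat \<Rightarrow> 'a \<Rightarrow> real) \<Rightarrow> real set" where
  "Sigma_ED B N = {\<tau>. \<tau> > 0 \<and> \<not> strong_exp_dich (\<lambda>n x. inverse \<tau> *\<^sub>R B n x) N}"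

end

theory Submission
  imports Defs "HOL-Library.Discrete_Functions"
begin

text \<open>Multiplying \<open>A n\<close> by \<open>((n + 1) / n) powr (- \<tau>)\<close> multiplies its cocycle from \<open>n\<close> to \<open>m\<close>
  by \<open>(m / n) powr (- \<tau>)\<close>, and multiplying \<open>B n\<close> by \<open>2 powr (- \<tau>)\<close> multiplies its cocycle
  from \<open>n\<close> to \<open>m\<close> by \<open>2 powr (- \<tau> * (m - n))\<close>; so the second rescaled cocycle is the first
  one sampled at the times \<open>2 ^ n\<close>. Sampling a polynomial dichotomy at the times \<open>2 ^ n\<close> gives an
  exponential dichotomy whose rates are multiplied by \<open>ln 2\<close>. Conversely, the projections of an
  exponential dichotomy at the dyadic times are transported to every time \<open>m\<close> from the dyadic
  time \<open>2 ^ floor_log m \<le> m\<close>; as \<open>m < 2 * 2 ^ floor_log m\<close>, bounded growth makes this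
  transport cost only a constant factor, and the exponential rates become polynomial ones
  divided by \<open>ln 2\<close>.\<close>

definition invertible_from :: "(nat \<Rightarrow> 'a::real_vector \<Rightarrow> 'a) \<Rightarrow> nat \<Rightarrow> bool" where
  "invertible_from C n0 \<longleftrightarrow> (\<forall>i\<ge>n0. linear (C i) \<and> bij (C i))"

lemma linear_inv:
  fixes f :: "'a::real_vector \<Rightarrow> 'b::real_vector"
  assumes f: "linear f" "bij f"
  shows "linear (inv f)"
proof (rule linearI)
  have right: "f (inv f y) = y" and left: "inv f (f x) = x" for x y
    using f(2) by (simp_all add: bij_is_surj surj_f_inv_f bij_is_inj inv_f_f)
  fix x y :: 'b and r :: real
  have "inv f (x + y) = inv f (f (inv f x + inv f y))"
    using right linear_add[OF f(1)] by metis
  then show "inv f (x + y) = inv f x + inv f y"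
    using left by simp
  have "inv f (r *\<^sub>R x) = inv f (f (r *\<^sub>R inv f x))"
    using right linear_cmul[OF f(1)] by metis
  then show "inv f (r *\<^sub>R x) = r *\<^sub>R inv f x"
    using left by simp
qed

lemma fwd_add: "fwd C n (k + l) = fwd C (n + k) l \<circ> fwd C n k"
  by (induction l) (auto simp: add.assoc)

lemma linear_bij_fwd:
  assumes "invertible_from C n0" "n0 \<le> n"
  shows "linear (fwd C n k) \<and> bij (fwd C n k)"
  using assms
  by (induction k) (auto simp: invertible_from_def linear_compose bij_comp real_vector.linear_id)

lemma cocycle_same [simp]: "cocycle C i i = id"
  by (simp add: cocycle_def)

lemma cocycle_Suc: "cocycle C (Suc n) n = C n"
  by (simp add: cocycle_def)

lemma cocycle_eq_comp_inv:
  assumes C: "invertible_from C n0" and "n0 \<le> i" "n0 \<le> j"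
  shows "cocycle C i j = cocycle C i n0 \<circ> inv (cocycle C j n0)"
proof (cases "j \<le> i")
  case True
  have split: "fwd C n0 (i - n0) = fwd C j (i - j) \<circ> fwd C n0 (j - n0)"
    using fwd_add[of C n0 "j - n0" "i - j"] True assms by simp
  have "bij (fwd C n0 (j - n0))"
    using linear_bij_fwd[OF C] by simp
  then have "fwd C n0 (j - n0) \<circ> inv (fwd C n0 (j - n0)) = id"
    using surj_iff bij_is_surj by blast
  then show ?thesis
    using True assms unfolding cocycle_def split by (simp add: comp_assoc)
next
  case False
  have split: "fwd C n0 (j - n0) = fwd C i (j - i) \<circ> fwd C n0 (i - n0)"
    using fwd_add[of C n0 "i - n0" "j - i"] False assms by simp
  have bij_i: "bij (fwd C n0 (i - n0))" and bij_ij: "bij (fwd C i (j - i))"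
    using linear_bij_fwd[OF C] assms by auto
  have right_inv: "fwd C n0 (i - n0) \<circ> inv (fwd C n0 (i - n0)) = id"
    using bij_i surj_iff bij_is_surj by blast
  have "cocycle C i n0 \<circ> inv (cocycle C j n0)
      = fwd C n0 (i - n0) \<circ> inv (fwd C n0 (i - n0)) \<circ> inv (fwd C i (j - i))"
    using assms by (simp add: cocycle_def split o_inv_distrib[OF bij_ij bij_i] comp_assoc)
  also have "\<dots> = cocycle C i j"
    using False by (simp add: right_inv cocycle_def)
  finally show ?thesis ..
qed

lemma linear_bij_cocycle:
  assumes C: "invertible_from C n0" and "n0 \<le> i" "n0 \<le> j"
  shows "linear (cocycle C i j) \<and> bij (cocycle C i j)"
proof -
  have "linear (cocycle C k n0) \<and> bij (cocycle C k n0)" if "n0 \<le> k" for k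
    using linear_bij_fwd[OF C, of n0] that by (simp add: cocycle_def)
  then show ?thesis
    unfolding cocycle_eq_comp_inv[OF assms] using assms
    by (simp add: linear_compose bij_comp linear_inv bij_imp_bij_inv)
qed

lemma cocycle_trans:
  assumes C: "invertible_from C n0" and "n0 \<le> i" "n0 \<le> j" "n0 \<le> k"
  shows "cocycle C i j (cocycle C j k x) = cocycle C i k x"
proof -
  have "bij (cocycle C j n0)"
    using linear_bij_cocycle[OF C, of j n0] assms by simp
  then have "inv (cocycle C j n0) (cocycle C j n0 y) = y" for y
    by (simp add: bij_is_inj inv_f_f)
  then show ?thesis
    using assms cocycle_eq_comp_inv[OF C, of i j] cocycle_eq_comp_inv[OF C, of j k]
      cocycle_eq_comp_inv[OF C, of i k]
    by simp
qed

lemma cocycle_commute: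
  assumes C: "invertible_from C n0"
    and P: "\<And>n. n0 \<le> n \<Longrightarrow> C n \<circ> P n = P (Suc n) \<circ> C n"
    and "n0 \<le> m" "n0 \<le> n"
  shows "cocycle C m n (P n x) = P m (cocycle C m n x)"
proof -
  have fwd: "fwd C i k \<circ> P i = P (i + k) \<circ> fwd C i k" if "n0 \<le> i" for i k
  proof (induction k)
    case (Suc k)
    have "fwd C i (Suc k) \<circ> P i = (C (i + k) \<circ> P (i + k)) \<circ> fwd C i k"
      by (simp only: fwd.simps(2) comp_assoc Suc.IH)
    also have "\<dots> = P (i + Suc k) \<circ> fwd C i (Suc k)"
      using P[of "i + k"] that by (simp add: comp_assoc)
    finally show ?case .
  qed simp
  show ?thesis
  proof (cases "n \<le> m")
    case True
    then show ?thesis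
      using fun_cong[OF fwd[OF assms(4), of "m - n"], of x] by (simp add: cocycle_def)
  next
    case False
    define g where "g = fwd C m (n - m)"
    have "bij g"
      using linear_bij_fwd[OF C assms(3)] by (simp add: g_def)
    have commute: "P n (g z) = g (P m z)" for z
      using fun_cong[OF fwd[OF assms(3), of "n - m"], of z] False by (simp add: g_def)
    have "cocycle C m n (P n x) = inv g (P n (g (inv g x)))"
      using False \<open>bij g\<close> by (simp add: cocycle_def g_def bij_is_surj surj_f_inv_f)
    also have "\<dots> = P m (inv g x)"
      using \<open>bij g\<close> by (simp only: commute bij_is_inj inv_f_f)
    also have "\<dots> = P m (cocycle C m n x)"
      using False by (simp add: cocycle_def g_def)
    finally show ?thesis .
  qed
qed

lemma linear_bij_scaleR:
  fixes f :: "'a::real_vector \<Rightarrow> 'a"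
  assumes c: "c \<noteq> 0" and f: "linear f" "bij f"
  shows "linear (\<lambda>x. c *\<^sub>R f x) \<and> bij (\<lambda>x. c *\<^sub>R f x)
    \<and> inv (\<lambda>x. c *\<^sub>R f x) = (\<lambda>y. inverse c *\<^sub>R inv f y)"
proof -
  have right: "(\<lambda>x. c *\<^sub>R f x) \<circ> (\<lambda>y. inverse c *\<^sub>R inv f y) = id"
    using c f by (auto simp: fun_eq_iff linear_cmul[OF f(1)] bij_is_surj surj_f_inv_f)
  have left: "(\<lambda>y. inverse c *\<^sub>R inv f y) \<circ> (\<lambda>x. c *\<^sub>R f x) = id"
    using c f by (auto simp: fun_eq_iff linear_cmul[OF f(1), symmetric] bij_is_inj inv_f_f)
  have "linear (\<lambda>x. c *\<^sub>R f x)"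
    using f by (intro linearI) (auto simp: linear_add linear_cmul scaleR_add_right)
  then show ?thesis
    using o_bij[OF left right] inv_unique_comp[OF right left] by simp
qed

lemma invertible_from_scaleR:
  assumes "invertible_from C n0" "\<And>i. n0 \<le> i \<Longrightarrow> c i \<noteq> 0"
  shows "invertible_from (\<lambda>i x. c i *\<^sub>R C i x) n0"
  using assms linear_bij_scaleR unfolding invertible_from_def by blast

lemma fwd_scaleR:
  assumes C: "invertible_from C n0" and "n0 \<le> n"
    and c: "\<And>i. n0 \<le> i \<Longrightarrow> c i = g (Suc i) / g i"
    and g: "\<And>i. n0 \<le> i \<Longrightarrow> g i > 0"
  shows "fwd (\<lambda>i x. c i *\<^sub>R C i x) n k x = (g (n + k) / g n) *\<^sub>R fwd C n k x"
proof (induction k)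
  case 0
  then show ?case
    using g[OF assms(2)] by simp
next
  case (Suc k)
  have lin: "linear (C (n + k))"
    using C assms(2) by (simp add: invertible_from_def)
  have "c (n + k) * g (n + k) = g (Suc (n + k))"
    using c[of "n + k"] g[of "n + k"] assms(2) by simp
  then show ?case
    using Suc by (simp add: linear_cmul[OF lin])
qed

lemma cocycle_scaleR:
  assumes C: "invertible_from C n0" and "n0 \<le> i" "n0 \<le> j"
    and c: "\<And>i. n0 \<le> i \<Longrightarrow> c i = g (Suc i) / g i"
    and g: "\<And>i. n0 \<le> i \<Longrightarrow> g i > 0"
  shows "cocycle (\<lambda>i x. c i *\<^sub>R C i x) i j x = (g i / g j) *\<^sub>R cocycle C i j x"
proof (cases "j \<le> i")
  case True
  then show ?thesis
    using fwd_scaleR[where c = c and g = g, OF C assms(3) c g] by (simp add: cocycle_def)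
next
  case False
  have fwd: "fwd (\<lambda>i x. c i *\<^sub>R C i x) i (j - i) = (\<lambda>x. (g j / g i) *\<^sub>R fwd C i (j - i) x)"
    using fwd_scaleR[where c = c and g = g, OF C assms(2) c g] False by (simp add: fun_eq_iff)
  have nonzero: "g j / g i \<noteq> 0"
    using g[OF assms(2)] g[OF assms(3)] by simp
  have "inv (\<lambda>x. (g j / g i) *\<^sub>R fwd C i (j - i) x)
      = (\<lambda>y. (g i / g j) *\<^sub>R inv (fwd C i (j - i)) y)"
    using linear_bij_scaleR[OF nonzero, of "fwd C i (j - i)"] linear_bij_fwd[OF C assms(2)] by simp
  then show ?thesis
    using False fwd by (simp add: cocycle_def)
qed

lemma cocycle_subsample:
  assumes C: "invertible_from C n0" and s: "\<And>n. n0 \<le> s n"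
  shows "cocycle (\<lambda>n. cocycle C (s (Suc n)) (s n)) m n = cocycle C (s m) (s n)"
proof -
  let ?B = "\<lambda>n. cocycle C (s (Suc n)) (s n)"
  have fwd: "fwd ?B n k = cocycle C (s (n + k)) (s n)" for n k
    by (induction k) (auto simp: fun_eq_iff cocycle_trans[OF C] s)
  show ?thesis
  proof (cases "n \<le> m")
    case True
    then show ?thesis
      by (simp add: cocycle_def[of ?B] fwd)
  next
    case False
    have "inv (cocycle C (s n) (s m)) = cocycle C (s m) (s n)"
      by (rule inv_unique_comp) (auto simp: fun_eq_iff cocycle_trans[OF C] s)
    then show ?thesis
      using False by (simp add: cocycle_def[of ?B] fwd cocycle_def[of C "s m"])
  qed
qed

lemma invertible_from_subsample:
  assumes "invertible_from C n0" "\<And>n. n0 \<le> s n"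
  shows "invertible_from (\<lambda>n. cocycle C (s (Suc n)) (s n)) 0"
  using linear_bij_cocycle[OF assms(1)] assms(2) by (simp add: invertible_from_def)

lemma powr_pow2_ratio:
  "(real (2 ^ m) / real (2 ^ n)) powr e = exp (e * ln 2 * (real m - real n))"
proof -
  have "real (2 ^ m) / real (2 ^ n) = 2 powr (real m - real n)"
    by (simp add: powr_diff powr_realpow)
  then show ?thesis
    by (simp add: powr_powr powr_def mult_ac)
qed

lemma exp_floor_log_le:
  assumes "1 \<le> n" "n \<le> m" "0 \<le> lam"
  shows "exp (- lam * (real (floor_log m) - real (floor_log n)))
    \<le> exp lam * (real m / real n) powr (- lam / ln 2)"
proof -
  have "real m / real n \<le> real (2 ^ (floor_log m + 1)) / real (2 ^ floor_log n)"
  proof (rule frac_le)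
    have "m \<le> 2 ^ (floor_log m + 1)"
      using floor_log_exp2_gt[of m] by simp
    then show "real m \<le> real (2 ^ (floor_log m + 1))"
      by (rule of_nat_mono)
    show "real (2 ^ floor_log n) \<le> real n"
      using floor_log_exp2_le[of n] assms(1) by simp
  qed simp_all
  then have "(real (2 ^ (floor_log m + 1)) / real (2 ^ floor_log n)) powr (- lam / ln 2)
      \<le> (real m / real n) powr (- lam / ln 2)"
    using assms by (intro powr_mono2') simp_all
  moreover have "(real (2 ^ (floor_log m + 1)) / real (2 ^ floor_log n)) powr (- lam / ln 2)
      = exp (- lam) * exp (- lam * (real (floor_log m) - real (floor_log n)))"
    unfolding powr_pow2_ratio by (simp add: exp_add[symmetric] algebra_simps)
  ultimately have "exp (- lam) * exp (- lam * (real (floor_log m) - real (floor_log n)))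
      \<le> (real m / real n) powr (- lam / ln 2)"
    by simp
  then show ?thesis
    by (simp add: exp_minus field_simps)
qed

definition poly_bounded_growth ::
  "(nat \<Rightarrow> 'a::real_vector \<Rightarrow> 'a) \<Rightarrow> (nat \<Rightarrow> 'a \<Rightarrow> real) \<Rightarrow> real \<Rightarrow> real \<Rightarrow> bool" where
  "poly_bounded_growth C N K a \<longleftrightarrow> (\<forall>m n x. 1 \<le> n \<and> n \<le> m \<longrightarrow>
     N m (cocycle C m n x) \<le> K * (real m / real n) powr a * N n x \<and>
     N n (cocycle C n m x) \<le> K * (real m / real n) powr a * N m x)"

lemma poly_bounded_growth_mono:
  assumes growth: "poly_bounded_growth C N K a" and "0 \<le> K" "K \<le> K'" "a \<le> a'"
    and N: "\<And>n x. 1 \<le> n \<Longrightarrow> 0 \<le> N n x"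
  shows "poly_bounded_growth C N K' a'"
  unfolding poly_bounded_growth_def
proof (intro allI impI conjI)
  fix m n :: nat and x
  assume mn: "1 \<le> n \<and> n \<le> m"
  have "K * (real m / real n) powr a \<le> K' * (real m / real n) powr a'"
    using assms mn by (intro mult_mono powr_mono) simp_all
  then have "K * (real m / real n) powr a * N k y \<le> K' * (real m / real n) powr a' * N k y"
    if "1 \<le> k" for k y
    using N[OF that] by (rule mult_right_mono)
  then show "N m (cocycle C m n x) \<le> K' * (real m / real n) powr a' * N n x"
    and "N n (cocycle C n m x) \<le> K' * (real m / real n) powr a' * N m x"
    using growth mn unfolding poly_bounded_growth_def by (meson order_trans le_trans)+
qed

lemma cocycle_poly_rescale:
  assumes A: "invertible_from A 1" and "1 \<le> m" "1 \<le> n"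
  shows "cocycle (\<lambda>n x. ((real n + 1) / real n) powr (- \<tau>) *\<^sub>R A n x) m n x
    = (real m / real n) powr (- \<tau>) *\<^sub>R cocycle A m n x"
proof -
  have c: "((real i + 1) / real i) powr (- \<tau>) = real (Suc i) powr (- \<tau>) / real i powr (- \<tau>)"
    for i
    by (simp add: powr_divide add.commute)
  have "cocycle (\<lambda>n x. ((real n + 1) / real n) powr (- \<tau>) *\<^sub>R A n x) m n x
      = (real m powr (- \<tau>) / real n powr (- \<tau>)) *\<^sub>R cocycle A m n x"
    by (rule cocycle_scaleR[where g = "\<lambda>i. real i powr (- \<tau>)", OF A assms(2,3) c]) simp
  then show ?thesis
    by (simp add: powr_divide)
qed

lemma poly_bounded_growth_rescale:
  assumes A: "invertible_from A 1" and norm: "\<And>n. 1 \<le> n \<Longrightarrow> is_norm (N n)"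
    and growth: "poly_bounded_growth A N K a"
  shows "poly_bounded_growth (\<lambda>n x. ((real n + 1) / real n) powr (- \<tau>) *\<^sub>R A n x) N K (a + \<bar>\<tau>\<bar>)"
    (is "poly_bounded_growth ?C N K _")
  unfolding poly_bounded_growth_def
proof (intro allI impI conjI)
  fix m n :: nat and x
  assume "1 \<le> n \<and> n \<le> m"
  then have n: "1 \<le> n" and nm: "n \<le> m" and m: "1 \<le> m"
    by auto
  define r where "r = real m / real n"
  have "1 \<le> r"
    using n nm by (simp add: r_def)
  then have r_le: "r powr (- \<tau>) \<le> r powr \<bar>\<tau>\<bar>" "r powr \<tau> \<le> r powr \<bar>\<tau>\<bar>"
    by (auto intro: powr_mono)
  have r_split: "r powr (a + \<bar>\<tau>\<bar>) = r powr \<bar>\<tau>\<bar> * r powr a"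
    by (simp add: powr_add)
  have N_scaleR: "N k (c *\<^sub>R y) = \<bar>c\<bar> * N k y" and N_nonneg: "0 \<le> N k y" if "1 \<le> k" for k c y
    using norm[OF that] by (auto simp: is_norm_def)
  have A_bounds: "N m (cocycle A m n x) \<le> K * r powr a * N n x"
    "N n (cocycle A n m x) \<le> K * r powr a * N m x"
    using growth n nm unfolding poly_bounded_growth_def r_def by auto
  have "N m (cocycle ?C m n x) = r powr (- \<tau>) * N m (cocycle A m n x)"
    using cocycle_poly_rescale[OF A m n] N_scaleR[OF m] by (simp add: r_def)
  also have "\<dots> \<le> r powr \<bar>\<tau>\<bar> * (K * r powr a * N n x)"
    using r_le A_bounds N_nonneg[OF m] by (intro mult_mono) auto
  finally show "N m (cocycle ?C m n x) \<le> K * (real m / real n) powr (a + \<bar>\<tau>\<bar>) * N n x"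
    by (simp add: r_def[symmetric] r_split mult_ac)
  have "N n (cocycle ?C n m x) = r powr \<tau> * N n (cocycle A n m x)"
    using cocycle_poly_rescale[OF A n m] N_scaleR[OF n] n
    by (simp add: r_def powr_divide powr_minus divide_simps)
  also have "\<dots> \<le> r powr \<bar>\<tau>\<bar> * (K * r powr a * N m x)"
    using r_le A_bounds N_nonneg[OF n] by (intro mult_mono) auto
  finally show "N n (cocycle ?C n m x) \<le> K * (real m / real n) powr (a + \<bar>\<tau>\<bar>) * N m x"
    by (simp add: r_def[symmetric] r_split mult_ac)
qed

lemma cocycle_exp_rescale_dyadic:
  assumes A: "invertible_from A 1"
  shows "cocycle (\<lambda>n x. inverse (2 powr \<tau>) *\<^sub>R cocycle A (2 ^ (n + 1)) (2 ^ n) x) m n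
    = cocycle (\<lambda>n x. ((real n + 1) / real n) powr (- \<tau>) *\<^sub>R A n x) (2 ^ m) (2 ^ n)"
proof
  fix x
  let ?B = "\<lambda>n. cocycle A (2 ^ Suc n) (2 ^ n)"
  let ?g = "\<lambda>i. 2 powr (- \<tau> * real i)"
  have B: "invertible_from ?B 0"
    using invertible_from_subsample[OF A, of "\<lambda>n. 2 ^ n"] by simp
  have c: "inverse (2 powr \<tau>) = ?g (Suc i) / ?g i" for i
  proof -
    have "?g (Suc i) / ?g i = 2 powr (- \<tau> * real (Suc i) - - \<tau> * real i)"
      by (rule powr_diff[symmetric])
    also have "\<dots> = 2 powr (- \<tau>)"
      by (simp add: algebra_simps)
    finally show ?thesis
      by (simp add: powr_minus)
  qed
  have "?g m / ?g n = (real (2 ^ m) / real (2 ^ n)) powr (- \<tau>)"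
    unfolding powr_pow2_ratio by (simp add: powr_def exp_diff[symmetric] algebra_simps)
  then show "cocycle (\<lambda>n x. inverse (2 powr \<tau>) *\<^sub>R cocycle A (2 ^ (n + 1)) (2 ^ n) x) m n x
    = cocycle (\<lambda>n x. ((real n + 1) / real n) powr (- \<tau>) *\<^sub>R A n x) (2 ^ m) (2 ^ n) x"
    using cocycle_scaleR[where g = ?g, OF B _ _ c] cocycle_subsample[OF A, of "\<lambda>n. 2 ^ n"]
      cocycle_poly_rescale[OF A, of "2 ^ m" "2 ^ n"]
    by simp
qed

locale dyadic_sampling =
  fixes C D :: "nat \<Rightarrow> 'a::real_vector \<Rightarrow> 'a" and N :: "nat \<Rightarrow> 'a \<Rightarrow> real" and K0 b :: real
  assumes invertible: "invertible_from C 1"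
    and cocycle_dyadic: "\<And>m n. cocycle D m n = cocycle C (2 ^ m) (2 ^ n)"
    and norm: "\<And>n. 1 \<le> n \<Longrightarrow> is_norm (N n)"
    and growth: "poly_bounded_growth C N K0 b"
    and K0_pos: "0 < K0" and b_nonneg: "0 \<le> b"
begin

lemma norm_nonneg: "1 \<le> n \<Longrightarrow> 0 \<le> N n x"
  using norm by (simp add: is_norm_def)

lemma growth_bounds:
  assumes "1 \<le> n" "n \<le> m"
  shows "N m (cocycle C m n x) \<le> K0 * (real m / real n) powr b * N n x"
    and "N n (cocycle C n m x) \<le> K0 * (real m / real n) powr b * N m x"
  using growth assms unfolding poly_bounded_growth_def by auto

lemma cocycle_C_trans:
  "1 \<le> i \<Longrightarrow> 1 \<le> j \<Longrightarrow> 1 \<le> k \<Longrightarrow> cocycle C i j (cocycle C j k x) = cocycle C i k x"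
  by (rule cocycle_trans[OF invertible])

lemma D_eq: "D n = cocycle C (2 ^ Suc n) (2 ^ n)"
  using cocycle_dyadic[of "Suc n" n] by (simp add: cocycle_Suc)

lemma invertible_D: "invertible_from D 0"
  using linear_bij_cocycle[OF invertible] by (simp add: invertible_from_def D_eq)

lemma poly_to_exp_dichotomy:
  assumes "strong_poly_dich C N"
  shows "strong_exp_dich D (\<lambda>n. N (2 ^ n))"
proof -
  obtain K a lam P where K: "K > 0" and a_lam: "a \<ge> lam" "lam > 0"
    and P: "\<forall>n\<ge>1. linear (P n) \<and> P n \<circ> P n = P n \<and> C n \<circ> P n = P (n + 1) \<circ> C n"
    and bounds: "\<forall>m n x. 1 \<le> n \<and> n \<le> m \<longrightarrow>
         N m (cocycle C m n (P n x)) \<le> K * (real m / real n) powr (- lam) * N n x \<and>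
         N n (cocycle C n m (x - P m x)) \<le> K * (real m / real n) powr (- lam) * N m x \<and>
         N m (cocycle C m n x) \<le> K * (real m / real n) powr a * N n x \<and>
         N n (cocycle C n m x) \<le> K * (real m / real n) powr a * N m x"
    using assms unfolding strong_poly_dich_def by blast
  have P_commute: "cocycle C m n (P n x) = P m (cocycle C m n x)" if "1 \<le> m" "1 \<le> n" for m n x
    using cocycle_commute[OF invertible _ that, of P] P by simp
  define Q where "Q n = P (2 ^ n)" for n
  define lam' where "lam' = lam * ln 2"
  define a' where "a' = a * ln 2"
  show ?thesis
    unfolding strong_exp_dich_def
  proof (intro exI conjI allI impI)
    show "K > 0" "lam' \<le> a'" "lam' > 0"
      using K a_lam by (simp_all add: lam'_def a'_def)
    fix n :: nat
    show "linear (Q n)" "Q n \<circ> Q n = Q n"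
      using P by (simp_all add: Q_def)
    show "D n \<circ> Q n = Q (n + 1) \<circ> D n"
      using P_commute[of "2 ^ Suc n" "2 ^ n"] by (simp add: fun_eq_iff D_eq Q_def)
  next
    fix m n :: nat and x
    assume "n \<le> m"
    then have "1 \<le> (2::nat) ^ n \<and> (2::nat) ^ n \<le> 2 ^ m"
      by simp
    note pow2_bounds = bounds[rule_format, OF this, of x]
    show "N (2 ^ m) (cocycle D m n (Q n x)) \<le> K * exp (- lam' * (real m - real n)) * N (2 ^ n) x"
      and "N (2 ^ n) (cocycle D n m (x - Q m x)) \<le> K * exp (- lam' * (real m - real n)) * N (2 ^ m) x"
      and "N (2 ^ m) (cocycle D m n x) \<le> K * exp (a' * (real m - real n)) * N (2 ^ n) x"
      and "N (2 ^ n) (cocycle D n m x) \<le> K * exp (a' * (real m - real n)) * N (2 ^ m) x"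
      using pow2_bounds unfolding powr_pow2_ratio
      by (simp_all add: cocycle_dyadic Q_def lam'_def a'_def mult_ac)
  qed
qed

lemma cocycle_floor_pow2_bounds:
  assumes "1 \<le> m"
  shows "N m (cocycle C m (2 ^ floor_log m) y) \<le> K0 * 2 powr b * N (2 ^ floor_log m) y"
    and "N (2 ^ floor_log m) (cocycle C (2 ^ floor_log m) m y) \<le> K0 * 2 powr b * N m y"
proof -
  have floor: "1 \<le> (2::nat) ^ floor_log m" "(2::nat) ^ floor_log m \<le> m"
    using floor_log_exp2_le[of m] assms by simp_all
  have "real m \<le> 2 * real (2 ^ floor_log m)"
    using floor_log_exp2_ge[of m] by (metis of_nat_le_iff of_nat_mult of_nat_numeral)
  then have "real m / real (2 ^ floor_log m) \<le> 2"
    by (simp add: divide_le_eq)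
  then have "K0 * (real m / real (2 ^ floor_log m)) powr b \<le> K0 * 2 powr b"
    using K0_pos b_nonneg by (simp add: powr_mono2)
  then have "K0 * (real m / real (2 ^ floor_log m)) powr b * N k z \<le> K0 * 2 powr b * N k z"
    if "1 \<le> k" for k z
    using norm_nonneg[OF that] by (rule mult_right_mono)
  then show "N m (cocycle C m (2 ^ floor_log m) y) \<le> K0 * 2 powr b * N (2 ^ floor_log m) y"
    and "N (2 ^ floor_log m) (cocycle C (2 ^ floor_log m) m y) \<le> K0 * 2 powr b * N m y"
    using growth_bounds[OF floor] floor assms by (meson order_trans)+
qed

lemma dyadic_transfer_bound:
  assumes "1 \<le> p" "1 \<le> q" "0 \<le> M"
    and "N (2 ^ floor_log p) u \<le> M * N (2 ^ floor_log q) (cocycle C (2 ^ floor_log q) q x)"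
  shows "N p (cocycle C p (2 ^ floor_log p) u) \<le> (K0 * 2 powr b)\<^sup>2 * M * N q x"
proof -
  let ?c = "K0 * 2 powr b"
  have "N p (cocycle C p (2 ^ floor_log p) u) \<le> ?c * N (2 ^ floor_log p) u"
    by (rule cocycle_floor_pow2_bounds(1)[OF assms(1)])
  also have "\<dots> \<le> ?c * (M * N (2 ^ floor_log q) (cocycle C (2 ^ floor_log q) q x))"
    using assms(4) K0_pos by (intro mult_left_mono) simp_all
  also have "\<dots> \<le> ?c * (M * (?c * N q x))"
    using cocycle_floor_pow2_bounds(2)[OF assms(2)] assms(3) K0_pos
    by (intro mult_left_mono) simp_all
  also have "\<dots> = ?c\<^sup>2 * M * N q x"
    by (simp add: power2_eq_square mult_ac)
  finally show ?thesis .
qed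

definition interpolated_proj :: "(nat \<Rightarrow> 'a \<Rightarrow> 'a) \<Rightarrow> nat \<Rightarrow> 'a \<Rightarrow> 'a" where
  "interpolated_proj Q m =
     cocycle C m (2 ^ floor_log m) \<circ> Q (floor_log m) \<circ> cocycle C (2 ^ floor_log m) m"

lemma interpolated_proj_commute:
  assumes Q: "\<And>n. D n \<circ> Q n = Q (Suc n) \<circ> D n" and "1 \<le> m" "1 \<le> n"
  shows "cocycle C m n (interpolated_proj Q n x) = interpolated_proj Q m (cocycle C m n x)"
proof -
  have dyadic: "cocycle C (2 ^ j) (2 ^ i) (Q i y) = Q j (cocycle C (2 ^ j) (2 ^ i) y)" for i j y
    using cocycle_commute[OF invertible_D, of Q j i y] Q by (simp add: cocycle_dyadic)
  let ?e = "\<lambda>k. 2 ^ floor_log k :: nat"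
  have "interpolated_proj Q m (cocycle C m n x)
      = cocycle C m (?e m) (Q (floor_log m) (cocycle C (?e m) (?e n) (cocycle C (?e n) n x)))"
    unfolding interpolated_proj_def using assms cocycle_C_trans by simp
  also have "\<dots> = cocycle C m (?e m) (cocycle C (?e m) (?e n) (Q (floor_log n) (cocycle C (?e n) n x)))"
    by (simp only: dyadic)
  also have "\<dots> = cocycle C m n (interpolated_proj Q n x)"
    unfolding interpolated_proj_def using assms cocycle_C_trans by simp
  finally show ?thesis ..
qed

lemma interpolated_proj_projection:
  assumes Q: "\<And>n. linear (Q n)" "\<And>n. Q n \<circ> Q n = Q n" "\<And>n. D n \<circ> Q n = Q (Suc n) \<circ> D n"
    and "1 \<le> n"
  shows "linear (interpolated_proj Q n)"
    and "interpolated_proj Q n \<circ> interpolated_proj Q n = interpolated_proj Q n"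
    and "C n \<circ> interpolated_proj Q n = interpolated_proj Q (n + 1) \<circ> C n"
proof -
  let ?e = "2 ^ floor_log n :: nat"
  show "linear (interpolated_proj Q n)"
    unfolding interpolated_proj_def
    using linear_bij_cocycle[OF invertible, of n ?e] linear_bij_cocycle[OF invertible, of ?e n] Q(1) assms(4)
    by (simp add: linear_compose)
  have "Q k (Q k z) = Q k z" for k z
    using fun_cong[OF Q(2)] by simp
  then show "interpolated_proj Q n \<circ> interpolated_proj Q n = interpolated_proj Q n"
    unfolding interpolated_proj_def fun_eq_iff using cocycle_C_trans[of ?e n ?e] assms(4) by simp
  show "C n \<circ> interpolated_proj Q n = interpolated_proj Q (n + 1) \<circ> C n"
    using interpolated_proj_commute[OF Q(3), of "Suc n" n] assms(4) by (simp add: fun_eq_iff cocycle_Suc)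
qed

lemma interpolated_proj_stable:
  assumes Q: "\<And>m n y. n \<le> m \<Longrightarrow>
      N (2 ^ m) (cocycle D m n (Q n y)) \<le> K * exp (- lam * (real m - real n)) * N (2 ^ n) y"
    and "0 \<le> K" "0 \<le> lam" "1 \<le> n" "n \<le> m"
  shows "N m (cocycle C m n (interpolated_proj Q n x))
    \<le> (K0 * 2 powr b)\<^sup>2 * K * exp lam * (real m / real n) powr (- lam / ln 2) * N n x"
proof -
  define y where "y = cocycle C (2 ^ floor_log n) n x"
  define E where "E = exp (- lam * (real (floor_log m) - real (floor_log n)))"
  have "cocycle C m n (interpolated_proj Q n x)
      = cocycle C m (2 ^ floor_log m) (cocycle C (2 ^ floor_log m) (2 ^ floor_log n) (Q (floor_log n) y))"
    unfolding interpolated_proj_def y_def using assms cocycle_C_trans by simp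
  moreover have "N (2 ^ floor_log m) (cocycle C (2 ^ floor_log m) (2 ^ floor_log n) (Q (floor_log n) y))
      \<le> K * E * N (2 ^ floor_log n) y"
    using Q[of "floor_log n" "floor_log m" y] floor_log_le_iff[OF assms(5)]
    by (simp add: E_def cocycle_dyadic)
  ultimately have "N m (cocycle C m n (interpolated_proj Q n x)) \<le> (K0 * 2 powr b)\<^sup>2 * (K * E) * N n x"
    using dyadic_transfer_bound[of m n "K * E"] assms by (simp add: y_def E_def)
  also have "\<dots> \<le> (K0 * 2 powr b)\<^sup>2 * (K * (exp lam * (real m / real n) powr (- lam / ln 2))) * N n x"
    using exp_floor_log_le[OF assms(4,5,3)] assms norm_nonneg
    by (intro mult_right_mono mult_left_mono) (simp_all add: E_def)
  finally show ?thesis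
    by (simp add: mult_ac)
qed

lemma interpolated_proj_unstable:
  assumes Q: "\<And>m n y. n \<le> m \<Longrightarrow>
      N (2 ^ n) (cocycle D n m (y - Q m y)) \<le> K * exp (- lam * (real m - real n)) * N (2 ^ m) y"
    and "0 \<le> K" "0 \<le> lam" "1 \<le> n" "n \<le> m"
  shows "N n (cocycle C n m (x - interpolated_proj Q m x))
    \<le> (K0 * 2 powr b)\<^sup>2 * K * exp lam * (real m / real n) powr (- lam / ln 2) * N m x"
proof -
  have m: "1 \<le> m"
    using assms by simp
  define z where "z = cocycle C (2 ^ floor_log m) m x"
  define E where "E = exp (- lam * (real (floor_log m) - real (floor_log n)))"
  have "x = cocycle C m (2 ^ floor_log m) z"
    unfolding z_def using cocycle_C_trans[of m "2 ^ floor_log m" m] m by simp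
  then have "x - interpolated_proj Q m x = cocycle C m (2 ^ floor_log m) (z - Q (floor_log m) z)"
    using linear_bij_cocycle[OF invertible, of m "2 ^ floor_log m"] m
    by (simp add: interpolated_proj_def z_def[symmetric] linear_diff cocycle_C_trans)
  then have "cocycle C n m (x - interpolated_proj Q m x)
      = cocycle C n (2 ^ floor_log n) (cocycle C (2 ^ floor_log n) (2 ^ floor_log m) (z - Q (floor_log m) z))"
    using assms cocycle_C_trans by simp
  moreover have "N (2 ^ floor_log n) (cocycle C (2 ^ floor_log n) (2 ^ floor_log m) (z - Q (floor_log m) z))
      \<le> K * E * N (2 ^ floor_log m) z"
    using Q[of "floor_log n" "floor_log m" z] floor_log_le_iff[OF assms(5)]
    by (simp add: E_def cocycle_dyadic)
  ultimately have "N n (cocycle C n m (x - interpolated_proj Q m x)) \<le> (K0 * 2 powr b)\<^sup>2 * (K * E) * N m x"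
    using dyadic_transfer_bound[of n m "K * E"] assms m by (simp add: z_def E_def)
  also have "\<dots> \<le> (K0 * 2 powr b)\<^sup>2 * (K * (exp lam * (real m / real n) powr (- lam / ln 2))) * N m x"
    using exp_floor_log_le[OF assms(4,5,3)] assms m norm_nonneg
    by (intro mult_right_mono mult_left_mono) (simp_all add: E_def)
  finally show ?thesis
    by (simp add: mult_ac)
qed

lemma exp_to_poly_dichotomy:
  assumes "strong_exp_dich D (\<lambda>n. N (2 ^ n))"
  shows "strong_poly_dich C N"
proof -
  obtain K a lam Q where K: "K > 0" and lam: "lam > 0"
    and Q: "\<forall>n. linear (Q n) \<and> Q n \<circ> Q n = Q n \<and> D n \<circ> Q n = Q (n + 1) \<circ> D n"
    and bounds: "\<forall>m n x. n \<le> m \<longrightarrow>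
         N (2 ^ m) (cocycle D m n (Q n x)) \<le> K * exp (- lam * (real m - real n)) * N (2 ^ n) x \<and>
         N (2 ^ n) (cocycle D n m (x - Q m x)) \<le> K * exp (- lam * (real m - real n)) * N (2 ^ m) x"
    using assms unfolding strong_exp_dich_def by blast
  define P where "P = interpolated_proj Q"
  define K' where "K' = max K0 ((K0 * 2 powr b)\<^sup>2 * K * exp lam)"
  define lam' where "lam' = lam / ln 2"
  define a' where "a' = max b lam'"
  have weaken: "(K0 * 2 powr b)\<^sup>2 * K * exp lam * (real m / real n) powr (- lam / ln 2) * N k x
      \<le> K' * (real m / real n) powr (- lam') * N k x" if "1 \<le> k" for m n k x
  proof -
    have "(K0 * 2 powr b)\<^sup>2 * K * exp lam \<le> K'"
      by (simp add: K'_def)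
    then show ?thesis
      using norm_nonneg[OF that] by (simp add: lam'_def mult_right_mono)
  qed
  have growth': "poly_bounded_growth C N K' a'"
    by (rule poly_bounded_growth_mono[OF growth])
      (use K0_pos norm_nonneg in \<open>auto simp: K'_def a'_def\<close>)
  show ?thesis
    unfolding strong_poly_dich_def
  proof (intro exI conjI allI impI)
    show "K' > 0" "lam' \<le> a'" "lam' > 0"
      using K0_pos lam by (simp_all add: K'_def a'_def lam'_def)
  next
    fix n :: nat
    assume "1 \<le> n"
    then show "linear (P n)" "P n \<circ> P n = P n" "C n \<circ> P n = P (n + 1) \<circ> C n"
      using interpolated_proj_projection[of Q n] Q by (simp_all add: P_def)
  next
    fix m n :: nat and x
    assume mn: "1 \<le> n \<and> n \<le> m"
    show "N m (cocycle C m n (P n x)) \<le> K' * (real m / real n) powr (- lam') * N n x"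
      unfolding P_def using mn K lam bounds
      by (intro order_trans[OF interpolated_proj_stable weaken]) auto
    show "N n (cocycle C n m (x - P m x)) \<le> K' * (real m / real n) powr (- lam') * N m x"
      unfolding P_def using mn K lam bounds
      by (intro order_trans[OF interpolated_proj_unstable weaken]) auto
    show "N m (cocycle C m n x) \<le> K' * (real m / real n) powr a' * N n x"
      and "N n (cocycle C n m x) \<le> K' * (real m / real n) powr a' * N m x"
      using growth' mn unfolding poly_bounded_growth_def by auto
  qed
qed

lemma poly_iff_exp_dichotomy: "strong_poly_dich C N \<longleftrightarrow> strong_exp_dich D (\<lambda>n. N (2 ^ n))"
  using poly_to_exp_dichotomy exp_to_poly_dichotomy by blast

end

theorem corollary2p1:
  fixes A :: "nat \<Rightarrow> real ^ 'd \<Rightarrow> real ^ 'd"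
    and N :: "nat \<Rightarrow> real ^ 'd \<Rightarrow> real"
    and \<tau> :: real
  assumes inv_lin: "\<And>n. n \<ge> 1 \<Longrightarrow> linear (A n) \<and> bij (A n)"
    and norms: "\<And>n. n \<ge> 1 \<Longrightarrow> is_norm (N n)"
    and bdd: "\<exists>K a. K > 0 \<and> a > 0 \<and> (\<forall>m n x. 1 \<le> n \<and> n \<le> m \<longrightarrow>
               N m (cocycle A m n x) \<le> K * (real m / real n) powr a * N n x \<and>
               N n (cocycle A n m x) \<le> K * (real m / real n) powr a * N m x)"
  shows "\<tau> \<in> Sigma_PD A N \<longleftrightarrow>
         2 powr \<tau> \<in> Sigma_ED (\<lambda>n. cocycle A (2 ^ (n + 1)) (2 ^ n)) (\<lambda>n. N (2 ^ n))"
proof -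
  define C where "C = (\<lambda>n x. ((real n + 1) / real n) powr (- \<tau>) *\<^sub>R A n x)"
  define D where "D = (\<lambda>n x. inverse (2 powr \<tau>) *\<^sub>R cocycle A (2 ^ (n + 1)) (2 ^ n) x)"
  have A: "invertible_from A 1"
    using inv_lin by (simp add: invertible_from_def)
  obtain K a where "K > 0" "a > 0" and growth: "poly_bounded_growth A N K a"
    using bdd unfolding poly_bounded_growth_def by blast
  have "invertible_from C 1"
    unfolding C_def by (rule invertible_from_scaleR[OF A]) simp
  moreover have "cocycle D m n = cocycle C (2 ^ m) (2 ^ n)" for m n
    unfolding C_def D_def by (rule cocycle_exp_rescale_dyadic[OF A])
  moreover have "poly_bounded_growth C N K (a + \<bar>\<tau>\<bar>)"
    unfolding C_def by (rule poly_bounded_growth_rescale[OF A norms growth])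
  ultimately interpret dyadic_sampling C D N K "a + \<bar>\<tau>\<bar>"
    using norms \<open>K > 0\<close> \<open>a > 0\<close> by unfold_locales auto
  show ?thesis
    using poly_iff_exp_dichotomy unfolding Sigma_PD_def Sigma_ED_def C_def D_def by simp
qed

end
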